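(* Let $U\subset N$ be a coordinate chart with coordinates $(x^1,x^2)$ on a surface with projective structure $[\nabla]$, and on $U\times\mathbb{R}_2$ with fibre coordinates $(\xi_1,\xi_2)$ associate to each torsion-free connection $\nabla\in[\nabla]$ with Christoffel symbols $\Gamma^k_{ij}$ and Schouten tensor $\mathrm{P}_{ij}$ the metric $$g_\nabla=\left(d\xi_i-\left(\Gamma_{ij}^k \xi_k -\xi_i\xi_j-\mathrm{P}_{ji}\right)dx^j\right)\odot dx^i .$$ This metric does not depend on the choice of connection in the projective class: if $\hat\nabla\in[\nabla]$ is related to $\nabla$ by $\hat{\Gamma}^i_{jk}=\Gamma^i_{jk}+\delta^i_j\Upsilon_k+\delta^i_k\Upsilon_j$ for a $1$-form $\Upsilon$, and the fibre coordinates are changed by $\hat\xi_i=\xi_i+\Upsilon_i$, then $g_{\hat\nabla}$ written in the coordinates $(x^i,\hat\xi_i)$ coincides with $g_\nabla$ written in the coordinates $(x^i,\xi_i)$.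
   Context: A projective structure $[\nabla]$ on a surface $N$ is an equivalence class of torsion-free connections on $TN$ with the same unparametrised geodesics; two torsion-free connections are projectively equivalent iff their Christoffel symbols are related by $\hat{\Gamma}^i_{jk}=\Gamma^i_{jk}+\delta^i_j\Upsilon_k+\delta^i_k\Upsilon_j$ for some $1$-form $\Upsilon$. The curvature is defined by $[\nabla_i,\nabla_j]X^k=R_{ij}{}^k{}_lX^l$, and the (not necessarily symmetric) Schouten tensor $\mathrm{P}_{ij}$ is defined by the unique decomposition $R_{ij}{}^k{}_l=\delta_i{}^k\mathrm{P}_{jl}-\delta_j{}^k\mathrm{P}_{il}-2\mathrm{P}_{[ij]}\delta_l{}^k$. Indices run over $1,2$ with summation convention, and $\odot$ denotes the symmetric tensor product. The coordinates $\xi_i$ are affine fibre coordinates of (an affine chart in) the projectivised tractor bundle of $(N,[\nabla])$. *)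

theory Defs
  imports "HOL-Analysis.Analysis"
begin

text \<open>Local coordinates on a chart U of the surface are points of real^2; indices run over
the two-element type 2. A connection is given by its Christoffel symbols:
G k i j x is the symbol with upper index k and lower indices i j at the point x.\<close>

type_synonym christoffel = "2 \<Rightarrow> 2 \<Rightarrow> 2 \<Rightarrow> real^2 \<Rightarrow> real"

definition kdelta :: "2 \<Rightarrow> 2 \<Rightarrow> real" where
  "kdelta i j = (if i = j then 1 else 0)"

definition pd :: "2 \<Rightarrow> (real^2 \<Rightarrow> real) \<Rightarrow> real^2 \<Rightarrow> real" where
  "pd i f x = frechet_derivative f (at x) (axis i 1)"

text \<open>Curvature R_ij^k_l defined by [nabla_i, nabla_j] X^k = R_ij^k_l X^l, where
nabla_i X^k = d_i X^k + G^k_il X^l (torsion-free connection).\<close>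
definition curv :: "christoffel \<Rightarrow> real^2 \<Rightarrow> 2 \<Rightarrow> 2 \<Rightarrow> 2 \<Rightarrow> 2 \<Rightarrow> real" where
  "curv G x i j k l =
     pd i (G k j l) x - pd j (G k i l) x
     + (\<Sum>m\<in>UNIV. G k i m x * G m j l x - G k j m x * G m i l x)"

definition is_schouten :: "christoffel \<Rightarrow> real^2 \<Rightarrow> (2 \<Rightarrow> 2 \<Rightarrow> real) \<Rightarrow> bool" where
  "is_schouten G x P \<longleftrightarrow>
     (\<forall>i j k l. curv G x i j k l =
        kdelta i k * P j l - kdelta j k * P i l - (P i j - P j i) * kdelta l k)"

definition schouten :: "christoffel \<Rightarrow> real^2 \<Rightarrow> 2 \<Rightarrow> 2 \<Rightarrow> real" where
  "schouten G x = (THE P. is_schouten G x P)"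

text \<open>The metric g_nabla at the point (x, xi) of U x R_2, evaluated on two tangent vectors
(v, w) where v are the dx-components and w the dxi-components.
g = theta_i \<odot> dx^i with theta_i = dxi_i - (G^k_ij xi_k - xi_i xi_j - P_ji) dx^j and
alpha \<odot> beta = (alpha \<otimes> beta + beta \<otimes> alpha)/2.\<close>
definition gmet :: "christoffel \<Rightarrow> real^2 \<Rightarrow> real^2 \<Rightarrow> (real^2) \<times> (real^2) \<Rightarrow> (real^2) \<times> (real^2) \<Rightarrow> real" where
  "gmet G x xi X Y =
     (let P = schouten G x;
          theta = (\<lambda>i (v::real^2, w::real^2).
             w $ i - (\<Sum>j\<in>UNIV. ((\<Sum>k\<in>UNIV. G k i j x * xi $ k) - xi $ i * xi $ j - P j i) * v $ j))
      in (\<Sum>i\<in>UNIV. (theta i X * (fst Y) $ i + theta i Y * (fst X) $ i) / 2))"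

definition proj_change :: "christoffel \<Rightarrow> (real^2 \<Rightarrow> real^2) \<Rightarrow> christoffel" where
  "proj_change G Upsilon =
     (\<lambda>k i j x. G k i j x + kdelta k i * Upsilon x $ j + kdelta k j * Upsilon x $ i)"

end

theory Submission imports Defs begin

text \<open>The metric is theta_i \<odot> dx^i with theta_i = d xi_i - (...) dx^j (here coframe), and each
theta_i is separately invariant: the extra term d Upsilon_i = d_j Upsilon_i dx^j coming from the
change of fibre coordinate is cancelled by the transformation law of the Schouten tensor,
which on a surface follows by solving the curvature decomposition explicitly for P.\<close>

lemma has_derivative_vec_nth_comp:
  assumes "U differentiable (at x)"
  shows "((\<lambda>y. U y $ l) has_derivative (\<lambda>h. frechet_derivative U (at x) h $ l)) (at x)"
  using bounded_linear.has_derivative[OF bounded_linear_vec_nth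
      assms[unfolded frechet_derivative_works]] .

lemma pd_vec_nth:
  assumes "U differentiable (at x)"
  shows "pd i (\<lambda>y. U y $ l) x = frechet_derivative U (at x) (axis i 1) $ l"
  unfolding pd_def using frechet_derivative_at[OF has_derivative_vec_nth_comp[OF assms]] by metis

lemma frechet_derivative_vec_nth_eq_sum_pd:
  assumes "U differentiable (at x)"
  shows "frechet_derivative U (at x) v $ l = (\<Sum>j\<in>UNIV. v $ j * pd j (\<lambda>y. U y $ l) x)"
proof -
  have lin: "linear (frechet_derivative U (at x))"
    using linear_frechet_derivative[OF assms] .
  have "v = v $ 1 *\<^sub>R axis 1 1 + v $ 2 *\<^sub>R axis 2 1"
    by (simp add: vec_eq_iff forall_2 axis_def)
  then have "frechet_derivative U (at x) v
      = v $ 1 *\<^sub>R frechet_derivative U (at x) (axis 1 1)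
        + v $ 2 *\<^sub>R frechet_derivative U (at x) (axis 2 1)"
    by (metis linear_add[OF lin] linear_scale[OF lin])
  then show ?thesis by (simp add: pd_vec_nth[OF assms] sum_2)
qed

lemma pd_proj_change:
  assumes "G k j l differentiable (at x)" and "U differentiable (at x)"
  shows "pd i (proj_change G U k j l) x
    = pd i (G k j l) x + kdelta k j * pd i (\<lambda>y. U y $ l) x + kdelta k l * pd i (\<lambda>y. U y $ j) x"
proof -
  have h: "(proj_change G U k j l has_derivative
     (\<lambda>h. frechet_derivative (G k j l) (at x) h + kdelta k j * frechet_derivative U (at x) h $ l
          + kdelta k l * frechet_derivative U (at x) h $ j)) (at x)"
    unfolding proj_change_def
    by (intro derivative_intros has_derivative_vec_nth_comp assms(2)
        assms(1)[unfolded frechet_derivative_works])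
  show ?thesis
    unfolding pd_def frechet_derivative_at[OF h, symmetric]
    using pd_vec_nth[OF assms(2)] unfolding pd_def by simp
qed

text \<open>On a surface the curvature has only the components R_12^k_l, and the decomposition
defining the Schouten tensor can be solved for P explicitly.\<close>

definition schouten_of_curv :: "(2 \<Rightarrow> 2 \<Rightarrow> 2 \<Rightarrow> 2 \<Rightarrow> real) \<Rightarrow> 2 \<Rightarrow> 2 \<Rightarrow> real" where
  "schouten_of_curv R = (\<lambda>i j.
     if i = 1 then (if j = 1 then - R 1 2 2 1 else (R 1 2 1 1 - 2 * R 1 2 2 2) / 3)
     else (if j = 1 then (2 * R 1 2 1 1 - R 1 2 2 2) / 3 else R 1 2 1 2))"

lemma curv_swap: "curv G x j i k l = - curv G x i j k l"
  unfolding curv_def by (simp add: sum_2 algebra_simps)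

lemma curv_diag: "curv G x i i k l = 0"
  unfolding curv_def by simp

lemma is_schouten_schouten_of_curv: "is_schouten G x (schouten_of_curv (curv G x))"
  unfolding is_schouten_def forall_2 kdelta_def schouten_of_curv_def
  by (simp add: curv_diag curv_swap[of G x 2 1] field_simps)

lemma is_schouten_unique:
  assumes "is_schouten G x P"
  shows "P = schouten_of_curv (curv G x)"
proof (intro ext)
  fix i j :: 2
  have R12: "\<And>k l. curv G x 1 2 k l
      = kdelta 1 k * P 2 l - kdelta 2 k * P 1 l - (P 1 2 - P 2 1) * kdelta l k"
    using assms unfolding is_schouten_def by blast
  show "P i j = schouten_of_curv (curv G x) i j"
    using exhaust_2[of i] exhaust_2[of j] R12[of 1 1] R12[of 1 2] R12[of 2 1] R12[of 2 2]
    by (auto simp: schouten_of_curv_def kdelta_def field_simps)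
qed

lemma schouten_eq_schouten_of_curv: "schouten G x = schouten_of_curv (curv G x)"
  unfolding schouten_def using is_schouten_schouten_of_curv is_schouten_unique by blast

lemma schouten_proj_change:
  assumes "\<And>k i j. G k i j differentiable (at x)" and "U differentiable (at x)"
    and "\<And>k. G k 2 1 x = G k 1 2 x"
  shows "schouten (proj_change G U) x j i
    = schouten G x j i - pd j (\<lambda>y. U y $ i) x + (\<Sum>k\<in>UNIV. G k i j x * U x $ k)
      + U x $ j * U x $ i"
  using exhaust_2[of i] exhaust_2[of j]
  unfolding schouten_eq_schouten_of_curv schouten_of_curv_def curv_def pd_proj_change[OF assms(1,2)]
  by (auto simp: sum_2 proj_change_def kdelta_def assms(3)
      field_simps)

definition coframe :: "christoffel \<Rightarrow> real^2 \<Rightarrow> real^2 \<Rightarrow> 2 \<Rightarrow> (real^2) \<times> (real^2) \<Rightarrow> real"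
  where "coframe G x xi i X =
    snd X $ i - (\<Sum>j\<in>UNIV. ((\<Sum>k\<in>UNIV. G k i j x * xi $ k) - xi $ i * xi $ j
                               - schouten G x j i) * fst X $ j)"

lemma gmet_coframe:
  "gmet G x xi X Y
    = (\<Sum>i\<in>UNIV. (coframe G x xi i X * fst Y $ i + coframe G x xi i Y * fst X $ i) / 2)"
  unfolding gmet_def coframe_def Let_def by (simp add: case_prod_beta)

lemma coframe_proj_change:
  assumes "\<And>k i j. G k i j differentiable (at x)" and "U differentiable (at x)"
    and "\<And>k. G k 2 1 x = G k 1 2 x"
  shows "coframe (proj_change G U) x (xi + U x) i (v, w + frechet_derivative U (at x) v)
    = coframe G x xi i (v, w)"
  using exhaust_2[of i] unfolding coframe_def schouten_proj_change[OF assms]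
  by (auto simp: frechet_derivative_vec_nth_eq_sum_pd[OF assms(2)] sum_2 proj_change_def kdelta_def assms(3) algebra_simps)

theorem theorem5p1:
  fixes U :: "(real^2) set" and G :: christoffel and Upsilon :: "real^2 \<Rightarrow> real^2"
  assumes "open U"
    and "\<forall>x\<in>U. \<forall>k i j. (G k i j) differentiable (at x)"
    and "\<forall>x\<in>U. \<forall>k i j. G k i j x = G k j i x"
    and "\<forall>x\<in>U. Upsilon differentiable (at x)"
  shows "\<forall>x\<in>U. \<forall>xi v w v' w'.
     gmet (proj_change G Upsilon) x (xi + Upsilon x)
          (v, w + frechet_derivative Upsilon (at x) v)
          (v', w' + frechet_derivative Upsilon (at x) v')
     = gmet G x xi (v, w) (v', w')"
proof (intro ballI allI)
  fix x xi v w v' w'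
  assume "x \<in> U"
  then have "\<And>k i j. G k i j differentiable (at x)" "Upsilon differentiable (at x)"
    "\<And>k. G k 2 1 x = G k 1 2 x"
    using assms(2-4) by blast+
  note invariant = coframe_proj_change[OF this]
  show "gmet (proj_change G Upsilon) x (xi + Upsilon x)
          (v, w + frechet_derivative Upsilon (at x) v)
          (v', w' + frechet_derivative Upsilon (at x) v')
     = gmet G x xi (v, w) (v', w')"
    by (simp add: gmet_coframe invariant)
qed

end
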